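(* Let $R$ be a route. Then $$\operatorname{conv}(\Pi(R))=\Big\{y\in\mathbb{R}^{[N]\times V_+}_{\ge 0}:\ y^\xi(R')\ge k_\xi(R')-1\ \text{ for all subroutes } R'\subseteq R \text{ and all } \xi\in[N]\Big\}.$$
   Context: $G=(V,E)$ is a complete undirected graph with $V=\{0\}\cup V_+$ ($0$ is the depot, $V_+$ the set of customers); $D=(V,A)$ is the digraph obtained by replacing each edge by two opposite arcs. $C\in\mathbb{Q}_{>0}$ is the vehicle capacity. There are $N$ scenarios $\xi\in[N]=\{1,\dots,N\}$, each with a demand vector $d^\xi\in\mathbb{Q}_{\ge 0}^{V_+}$ and probability $p_\xi\in[0,1]\cap\mathbb{Q}$, $\sum_\xi p_\xi=1$; it is assumed that $d^\xi(v)\le C$ for all $\xi\in[N]$, $v\in V_+$. For a vector $f$ and set $S$ of its coordinates, $f(S)=\sum_{i\in S}f(i)$; $k_\xi(S)=\lceil d^\xi(S)/C\rceil$. A route $R=(v_1,\dots,v_\ell)$ ($\ell\ge 1$, distinct customers $v_i\in V_+$) is the cycle $0,v_1,\dots,v_\ell,0$; $V_+(R)=\{v_1,\dots,v_\ell\}$ and $v_0=v_{\ell+1}=0$. A subroute of $R$ is a route $R'=(v_i,\dots,v_j)$ with $1\le i\le j\le \ell$, written $R'\subseteq R$. Vectors $y\in\mathbb{R}^{[N]\times V_+}$ have entries $y^\xi_v$; $y^\xi\in\mathbb{R}^{V_+}$ is the restriction to scenario $\xi$; $y^\xi(R')=y^\xi(V_+(R'))$, $k_\xi(R')=k_\xi(V_+(R'))$.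 For a route $R=(v_1,\dots,v_\ell)$ and $\xi\in[N]$, a recourse action is an integer vector $y^\xi\in\mathbb{Z}^{V_+}_{\ge 0}$ for which there exist $f\in\mathbb{R}^{A}_{\ge 0}$ and $g\in\mathbb{R}^{V_+}_{\ge 0}$ with $f_{(v_{i-1},v_i)}+d^\xi(v_i)=f_{(v_i,v_{i+1})}+g_{v_i}$ for all $i\in[\ell]$, $f_{(v_{i-1},v_i)}\le C$ for all $i\in[\ell+1]$, and $g_{v_i}\le C\,y^\xi_{v_i}$ for all $i\in[\ell]$. The set of recourse actions is $\mathcal{Y}^\xi(R)$, and the set of recourse policies is $\Pi(R)=\mathcal{Y}^1(R)\times\cdots\times\mathcal{Y}^N(R)\subseteq\mathbb{Z}^{[N]\times V_+}$. *)

theory Defs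
  imports "HOL-Analysis.Analysis"
begin

text \<open>Vertices: the depot 0 is None, customer v is Some v (customers of type 'v).
  Scenario vectors y in R^([N] x V+) are functions nat => 'v => real, scenario indices 1..N;
  outside [N] x V+ they are required to be 0.\<close>

definition arcs :: "'v set \<Rightarrow> ('v option \<times> 'v option) set" where
  "arcs Vp = {(u, w). u \<in> insert None (Some ` Vp) \<and> w \<in> insert None (Some ` Vp) \<and> u \<noteq> w}"

definition is_route :: "'v set \<Rightarrow> 'v list \<Rightarrow> bool" where
  "is_route Vp R \<longleftrightarrow> R \<noteq> [] \<and> distinct R \<and> set R \<subseteq> Vp"

text \<open>The i-th vertex v_i of the cycle 0,v_1,...,v_l,0 (v_0 = v_(l+1) = depot).\<close>
definition rvert :: "'v list \<Rightarrow> nat \<Rightarrow> 'v option" where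
  "rvert R i = (if 1 \<le> i \<and> i \<le> length R then Some (R ! (i - 1)) else None)"

definition subroutes :: "'v list \<Rightarrow> 'v list set" where
  "subroutes R = {drop (i - 1) (take j R) | i j. 1 \<le> i \<and> i \<le> j \<and> j \<le> length R}"

definition kcap :: "real \<Rightarrow> ('v \<Rightarrow> real) \<Rightarrow> 'v set \<Rightarrow> int" where
  "kcap C d S = \<lceil>sum d S / C\<rceil>"

definition recourse_actions :: "'v set \<Rightarrow> real \<Rightarrow> ('v \<Rightarrow> real) \<Rightarrow> 'v list \<Rightarrow> ('v \<Rightarrow> real) set" where
  "recourse_actions Vp C d R =
     {y. (\<forall>v\<in>Vp. y v \<in> \<int> \<and> y v \<ge> 0) \<and>
        (\<exists>f g. (\<forall>a\<in>arcs Vp. f a \<ge> 0) \<and> (\<forall>v\<in>Vp. g v \<ge> 0) \<and>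
          (\<forall>i\<in>{1..length R}. f (rvert R (i - 1), rvert R i) + d (R ! (i - 1))
                               = f (rvert R i, rvert R (i + 1)) + g (R ! (i - 1))) \<and>
          (\<forall>i\<in>{1..length R + 1}. f (rvert R (i - 1), rvert R i) \<le> C) \<and>
          (\<forall>i\<in>{1..length R}. g (R ! (i - 1)) \<le> C * y (R ! (i - 1))))}"

definition policies :: "nat \<Rightarrow> 'v set \<Rightarrow> real \<Rightarrow> (nat \<Rightarrow> 'v \<Rightarrow> real) \<Rightarrow> 'v list
     \<Rightarrow> (nat \<Rightarrow> 'v \<Rightarrow> real) set" where
  "policies N Vp C d R =
     {y. (\<forall>\<xi> v. (\<xi> \<notin> {1..N} \<or> v \<notin> Vp) \<longrightarrow> y \<xi> v = 0) \<and>
         (\<forall>\<xi>\<in>{1..N}. y \<xi> \<in> recourse_actions Vp C (d \<xi>) R)}"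

definition conv :: "(nat \<Rightarrow> 'v \<Rightarrow> real) set \<Rightarrow> (nat \<Rightarrow> 'v \<Rightarrow> real) set" where
  "conv S = {y. \<exists>(m::nat) c p. (\<forall>i<m. c i \<ge> 0 \<and> p i \<in> S) \<and> (\<Sum>i<m. c i) = 1 \<and>
                  y = (\<lambda>\<xi> v. \<Sum>i<m. c i * p i \<xi> v)}"

end

theory Submission
  imports Defs
begin

(* For one scenario, an integral y is a recourse action iff on every subroute R' the demand
   is covered by one vehicle load plus one load per return trip, d(R') <= C (1 + y(R')), which for
   integral y is y(R') >= k(R') - 1. Necessity: flow conservation telescopes along R'.
   Sufficiency: in the greedy flow the arc loads obey Lindley's recursion, so each is a
   demand-minus-refill sum over a subroute and hence at most C.

   The right-hand side is convex and contains Pi(R). Conversely, for y in it, round the prefix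
   sums P_k = y(v_1,...,v_k) at a common threshold theta in [0,1):
   z_theta(v_k) = ceil(P_k - theta) - ceil(P_(k-1) - theta). Subroute sums of z_theta are
   differences of such ceilings, so they keep the integral lower bounds k - 1, and z_theta is a
   policy. Averaging over theta returns y, since the integral of ceil(x - theta) over [0,1) is x;
   z_theta only changes where theta crosses a fractional part of some P_k, so the average is a
   finite convex combination. *)

lemma set_drop_take_eq_image:
  assumes "j \<le> length xs"
  shows "set (drop a (take j xs)) = (!) xs ` {a..<j}"
proof -
  have "drop a (take j xs) = map ((!) xs) [a..<j]"
    using assms by (intro nth_equalityI) auto
  then show ?thesis by simp
qed

lemma sum_set_drop_take:
  assumes "distinct xs" "j \<le> length xs"
  shows "sum h (set (drop a (take j xs))) = (\<Sum>q = a..<j. h (xs ! q))"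
proof -
  have "inj_on ((!) xs) {a..<j}"
    using assms by (intro inj_on_nth) auto
  then show ?thesis
    using assms(2) by (simp add: set_drop_take_eq_image sum.reindex)
qed

lemma drop_take_in_subroutes: "a < j \<Longrightarrow> j \<le> length R \<Longrightarrow> drop a (take j R) \<in> subroutes R"
  unfolding subroutes_def by (intro CollectI exI[of _ "Suc a"] exI[of _ j]) auto

lemma subroutesE:
  assumes "R' \<in> subroutes R"
  obtains a j where "a < j" "j \<le> length R" "R' = drop a (take j R)"
proof -
  obtain i j where "1 \<le> i" "i \<le> j" "j \<le> length R" "R' = drop (i - 1) (take j R)"
    using assms unfolding subroutes_def by blast
  then show ?thesis by (intro that[of "i - 1" j]) auto
qed

definition pos :: "'a list \<Rightarrow> 'a \<Rightarrow> nat" where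
  "pos xs x = the_inv_into {..<length xs} ((!) xs) x"

lemma pos_nth: "distinct xs \<Longrightarrow> q < length xs \<Longrightarrow> pos xs (xs ! q) = q"
  unfolding pos_def by (rule the_inv_into_f_f) (auto intro: inj_on_nth)

lemma kcap_minus_one_le_iff:
  assumes "C > 0" "Y \<in> \<int>"
  shows "of_int (kcap C d A) - 1 \<le> Y \<longleftrightarrow> sum d A \<le> C + C * Y"
proof -
  obtain n where Y: "Y = of_int n" using assms(2) by (auto elim: Ints_cases)
  have "of_int (kcap C d A) - 1 \<le> Y \<longleftrightarrow> kcap C d A \<le> n + 1"
    unfolding Y by linarith
  also have "\<dots> \<longleftrightarrow> sum d A / C \<le> of_int n + 1"
    unfolding kcap_def by (simp add: ceiling_le_iff)
  also have "\<dots> \<longleftrightarrow> sum d A \<le> C + C * Y"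
    using assms(1) by (simp add: Y pos_divide_le_eq algebra_simps)
  finally show ?thesis .
qed

lemma ceiling_add_le_ceiling:
  fixes x y :: real
  assumes "of_int k \<le> y - x"
  shows "\<lceil>x\<rceil> + k \<le> \<lceil>y\<rceil>"
proof -
  have "\<lceil>x + of_int k\<rceil> \<le> \<lceil>y\<rceil>"
    using assms by (intro ceiling_mono) simp
  then show ?thesis by simp
qed

fun lindley :: "(nat \<Rightarrow> real) \<Rightarrow> nat \<Rightarrow> real" where
  "lindley e 0 = 0"
| "lindley e (Suc q) = max 0 (lindley e q + e q)"

lemma lindley_nonneg: "0 \<le> lindley e q"
  by (cases q) auto

lemma lindley_cases: "lindley e q = 0 \<or> (\<exists>a<q. lindley e q = (\<Sum>s = a..<q. e s))"
proof (induction q)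
  case (Suc q)
  show ?case
  proof (cases "lindley e q + e q \<le> 0")
    case False
    then have step: "lindley e (Suc q) = lindley e q + e q" by simp
    from Suc.IH show ?thesis
    proof
      assume "lindley e q = 0"
      then show ?thesis using step by (intro disjI2 exI[of _ q]) simp
    next
      assume "\<exists>a<q. lindley e q = (\<Sum>s = a..<q. e s)"
      then obtain a where "a < q" "lindley e q = (\<Sum>s = a..<q. e s)" by blast
      then show ?thesis using step by (intro disjI2 exI[of _ a]) simp
    qed
  qed simp
qed simp

lemma lindley_le:
  assumes "0 \<le> B" "\<forall>a<q. (\<Sum>s = a..<q. e s) \<le> B"
  shows "lindley e q \<le> B"
  using lindley_cases[of e q] assms by auto

lemma rvert_0 [simp]: "rvert R 0 = None"
  by (simp add: rvert_def)

lemma rvert_Suc: "q < length R \<Longrightarrow> rvert R (Suc q) = Some (R ! q)"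
  by (simp add: rvert_def)

lemma rvert_beyond: "length R < i \<Longrightarrow> rvert R i = None"
  by (simp add: rvert_def)

lemma rvert_arc_in_arcs:
  assumes route: "is_route Vp R" and q: "q \<le> length R"
  shows "(rvert R q, rvert R (Suc q)) \<in> arcs Vp"
proof -
  have vertex: "rvert R i \<in> insert None (Some ` Vp)" for i
    using route nth_mem by (fastforce simp: rvert_def is_route_def)
  have "rvert R q \<noteq> rvert R (Suc q)"
  proof (cases q)
    case 0
    then show ?thesis using route by (simp add: rvert_Suc is_route_def)
  next
    case (Suc q')
    then have "rvert R q = Some (R ! q')" using q by (simp add: rvert_Suc)
    moreover have "rvert R (Suc q) \<noteq> Some (R ! q')"
      using route Suc by (cases "q < length R") (auto simp: rvert_Suc rvert_beyond nth_eq_iff_index_eq is_route_def)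
    ultimately show ?thesis by simp
  qed
  then show ?thesis using vertex unfolding arcs_def by auto
qed

lemma recourse_action_load_bound:
  assumes route: "is_route Vp R" and z: "z \<in> recourse_actions Vp C d R"
    and aj: "a < j" "j \<le> length R"
  shows "(\<Sum>q = a..<j. d (R ! q)) \<le> C + C * (\<Sum>q = a..<j. z (R ! q))"
proof -
  obtain f g where f_nonneg: "\<forall>a\<in>arcs Vp. f a \<ge> 0"
    and balance: "\<forall>i\<in>{1..length R}. f (rvert R (i - 1), rvert R i) + d (R ! (i - 1))
                               = f (rvert R i, rvert R (i + 1)) + g (R ! (i - 1))"
    and f_cap: "\<forall>i\<in>{1..length R + 1}. f (rvert R (i - 1), rvert R i) \<le> C"
    and g_cap: "\<forall>i\<in>{1..length R}. g (R ! (i - 1)) \<le> C * z (R ! (i - 1))"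
    using z unfolding recourse_actions_def by blast
  define F where "F q = f (rvert R q, rvert R (Suc q))" for q
  have "d (R ! q) = F (Suc q) - F q + g (R ! q)" if "q < length R" for q
    using balance[rule_format, of "Suc q"] that by (simp add: F_def)
  then have "(\<Sum>q = a..<j. d (R ! q)) = (\<Sum>q = a..<j. F (Suc q) - F q) + (\<Sum>q = a..<j. g (R ! q))"
    using aj by (simp add: sum.distrib)
  also have "\<dots> = F j - F a + (\<Sum>q = a..<j. g (R ! q))"
    using aj by (simp add: sum_Suc_diff')
  also have "\<dots> \<le> F j - F a + (\<Sum>q = a..<j. C * z (R ! q))"
    using aj g_cap[rule_format, of "Suc _"] by (intro add_left_mono sum_mono) auto
  finally have "(\<Sum>q = a..<j. d (R ! q)) \<le> F j - F a + C * (\<Sum>q = a..<j. z (R ! q))"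
    by (simp add: sum_distrib_left)
  moreover have "F a \<ge> 0"
    using f_nonneg rvert_arc_in_arcs[OF route, of a] aj by (simp add: F_def)
  moreover have "F j \<le> C"
    using f_cap[rule_format, of "Suc j"] aj by (simp add: F_def)
  ultimately show ?thesis by simp
qed

lemma recourse_actionI:
  fixes R :: "'v list" and Vp :: "'v set"
  assumes route: "is_route Vp R" and C: "C > 0" and d_nonneg: "\<forall>v\<in>Vp. 0 \<le> d v"
    and z: "\<forall>v\<in>Vp. z v \<in> \<int> \<and> 0 \<le> z v"
    and load_bound: "\<forall>a j. a < j \<longrightarrow> j \<le> length R \<longrightarrow>
        (\<Sum>q = a..<j. d (R ! q)) \<le> C + C * (\<Sum>q = a..<j. z (R ! q))"
  shows "z \<in> recourse_actions Vp C d R"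
proof -
  have distinct: "distinct R" and customers: "\<And>q. q < length R \<Longrightarrow> R ! q \<in> Vp"
    using route by (auto simp: is_route_def)
  define L where "L = lindley (\<lambda>q. d (R ! q) - C * z (R ! q))"
  define f :: "'v option \<times> 'v option \<Rightarrow> real"
    where "f arc = (case fst arc of None \<Rightarrow> 0 | Some v \<Rightarrow> L (Suc (pos R v)))" for arc
  define g where "g v = (if v \<in> set R then L (pos R v) + d v - L (Suc (pos R v)) else 0)" for v
  have f_leaving: "f (rvert R q, w) = L q" if "q \<le> length R" for q w
    using that by (cases q) (auto simp: f_def L_def rvert_Suc pos_nth[OF distinct])
  have g_nth: "g (R ! q) = L q + d (R ! q) - L (Suc q)" if "q < length R" for q
    using that by (simp add: g_def pos_nth[OF distinct])
  have L_cap: "L q \<le> C" if "q \<le> length R" for q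
    unfolding L_def
  proof (rule lindley_le)
    show "\<forall>a<q. (\<Sum>s = a..<q. d (R ! s) - C * z (R ! s)) \<le> C"
    proof (intro allI impI)
      fix a assume "a < q"
      then have "(\<Sum>s = a..<q. d (R ! s)) \<le> C + C * (\<Sum>s = a..<q. z (R ! s))"
        using load_bound that by blast
      then show "(\<Sum>s = a..<q. d (R ! s) - C * z (R ! s)) \<le> C"
        by (simp add: sum_subtractf sum_distrib_left)
    qed
  qed (use C in simp)
  have L_step: "L q + d (R ! q) - C * z (R ! q) \<le> L (Suc q) \<and> L (Suc q) \<le> L q + d (R ! q)"
    if "q < length R" for q
    using d_nonneg z customers[OF that] C lindley_nonneg
    by (auto simp: L_def mult_nonneg_nonneg)
  show ?thesis
    unfolding recourse_actions_def
  proof (intro CollectI conjI exI[of _ f] exI[of _ g] ballI)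
    fix v
    show "0 \<le> g v"
    proof (cases "v \<in> set R")
      case True
      then obtain q where "q < length R" "v = R ! q" by (auto simp: in_set_conv_nth)
      then show ?thesis using g_nth L_step by simp
    qed (simp add: g_def)
  next
    fix i assume "i \<in> {1..length R}"
    then obtain q where q: "i = Suc q" "q < length R" by (cases i) auto
    show "f (rvert R (i - 1), rvert R i) + d (R ! (i - 1)) = f (rvert R i, rvert R (i + 1)) + g (R ! (i - 1))"
      using q f_leaving[of q] f_leaving[of "Suc q"] g_nth by simp
    show "g (R ! (i - 1)) \<le> C * z (R ! (i - 1))"
      using q L_step[of q] g_nth[of q] by simp
  next
    fix i assume "i \<in> {1..length R + 1}"
    then obtain q where "i = Suc q" "q \<le> length R" by (cases i) auto
    then show "f (rvert R (i - 1), rvert R i) \<le> C"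
      using f_leaving L_cap by simp
  qed (use z in \<open>auto simp: f_def L_def lindley_nonneg split: option.split\<close>)
qed

lemma recourse_actions_iff_subroute_bounds:
  assumes route: "is_route Vp R" and C: "C > 0" and d_nonneg: "\<forall>v\<in>Vp. 0 \<le> d v"
  shows "z \<in> recourse_actions Vp C d R \<longleftrightarrow>
    (\<forall>v\<in>Vp. z v \<in> \<int> \<and> 0 \<le> z v) \<and>
    (\<forall>R'\<in>subroutes R. of_int (kcap C d (set R')) - 1 \<le> sum z (set R'))"
proof -
  have distinct: "distinct R" and customers: "\<And>q. q < length R \<Longrightarrow> R ! q \<in> Vp"
    using route by (auto simp: is_route_def)
  have "(\<forall>R'\<in>subroutes R. of_int (kcap C d (set R')) - 1 \<le> sum z (set R')) \<longleftrightarrow>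
      (\<forall>a j. a < j \<longrightarrow> j \<le> length R \<longrightarrow>
        (\<Sum>q = a..<j. d (R ! q)) \<le> C + C * (\<Sum>q = a..<j. z (R ! q)))"
    if integral: "\<forall>v\<in>Vp. z v \<in> \<int>"
  proof -
    have bound_iff: "of_int (kcap C d (set (drop a (take j R)))) - 1 \<le> sum z (set (drop a (take j R)))
        \<longleftrightarrow> (\<Sum>q = a..<j. d (R ! q)) \<le> C + C * (\<Sum>q = a..<j. z (R ! q))"
      if "j \<le> length R" for a j
    proof -
      have "(\<Sum>q = a..<j. z (R ! q)) \<in> \<int>"
        using that integral customers by (intro Ints_sum) auto
      then show ?thesis
        using that by (simp add: kcap_minus_one_le_iff[OF C] sum_set_drop_take[OF distinct])
    qed
    show ?thesis
    proof (intro iffI allI impI ballI)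
      fix a j :: nat assume "\<forall>R'\<in>subroutes R. of_int (kcap C d (set R')) - 1 \<le> sum z (set R')"
        and "a < j" "j \<le> length R"
      then show "(\<Sum>q = a..<j. d (R ! q)) \<le> C + C * (\<Sum>q = a..<j. z (R ! q))"
        using bound_iff drop_take_in_subroutes by blast
    next
      fix R' assume "\<forall>a j. a < j \<longrightarrow> j \<le> length R \<longrightarrow>
        (\<Sum>q = a..<j. d (R ! q)) \<le> C + C * (\<Sum>q = a..<j. z (R ! q))"
        and "R' \<in> subroutes R"
      then show "of_int (kcap C d (set R')) - 1 \<le> sum z (set R')"
        using bound_iff by (auto elim: subroutesE)
    qed
  qed
  moreover have "\<forall>v\<in>Vp. z v \<in> \<int> \<and> 0 \<le> z v" if "z \<in> recourse_actions Vp C d R"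
    using that by (simp add: recourse_actions_def)
  ultimately show ?thesis
    using recourse_action_load_bound[OF route] recourse_actionI[OF route C d_nonneg] by meson
qed

definition subroute_polytope :: "nat \<Rightarrow> 'v set \<Rightarrow> real \<Rightarrow> (nat \<Rightarrow> 'v \<Rightarrow> real) \<Rightarrow> 'v list
     \<Rightarrow> (nat \<Rightarrow> 'v \<Rightarrow> real) set" where
  "subroute_polytope N Vp C d R =
    {y. (\<forall>\<xi> v. (\<xi> \<notin> {1..N} \<or> v \<notin> Vp) \<longrightarrow> y \<xi> v = 0) \<and>
        (\<forall>\<xi>\<in>{1..N}. \<forall>v\<in>Vp. y \<xi> v \<ge> 0) \<and>
        (\<forall>\<xi>\<in>{1..N}. \<forall>R'\<in>subroutes R.
            sum (y \<xi>) (set R') \<ge> of_int (kcap C (d \<xi>) (set R')) - 1)}"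

lemma policies_subset_subroute_polytope:
  assumes "is_route Vp R" "C > 0" "\<forall>\<xi>\<in>{1..N}. \<forall>v\<in>Vp. 0 \<le> d \<xi> v"
  shows "policies N Vp C d R \<subseteq> subroute_polytope N Vp C d R"
  using recourse_actions_iff_subroute_bounds[OF assms(1,2)] assms(3)
  unfolding policies_def subroute_polytope_def by blast

lemma conv_mono: "S \<subseteq> S' \<Longrightarrow> conv S \<subseteq> conv S'"
  unfolding conv_def by blast

lemma conv_subroute_polytope: "conv (subroute_polytope N Vp C d R) \<subseteq> subroute_polytope N Vp C d R"
proof
  fix y assume "y \<in> conv (subroute_polytope N Vp C d R)"
  then obtain m :: nat and c p where c: "\<And>i. i < m \<Longrightarrow> 0 \<le> c i"
    and p: "\<And>i. i < m \<Longrightarrow> p i \<in> subroute_polytope N Vp C d R"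
    and c_sum: "(\<Sum>i<m. c i) = 1" and y: "\<And>\<xi> v. y \<xi> v = (\<Sum>i<m. c i * p i \<xi> v)"
    unfolding conv_def by auto
  show "y \<in> subroute_polytope N Vp C d R"
    unfolding subroute_polytope_def
  proof (intro CollectI conjI allI ballI impI)
    fix \<xi> v assume "\<xi> \<notin> {1..N} \<or> v \<notin> Vp"
    then have "p i \<xi> v = 0" if "i < m" for i
      using p[OF that] unfolding subroute_polytope_def by blast
    then show "y \<xi> v = 0"
      unfolding y by (intro sum.neutral) simp
  next
    fix \<xi> v assume "\<xi> \<in> {1..N}" "v \<in> Vp"
    then have "0 \<le> p i \<xi> v" if "i < m" for i
      using p[OF that] unfolding subroute_polytope_def by blast
    then show "0 \<le> y \<xi> v"
      unfolding y using c by (intro sum_nonneg mult_nonneg_nonneg) simp_all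
  next
    fix \<xi> R' assume "\<xi> \<in> {1..N}" "R' \<in> subroutes R"
    then have p_bound: "of_int (kcap C (d \<xi>) (set R')) - 1 \<le> sum (p i \<xi>) (set R')" if "i < m" for i
      using p[OF that] unfolding subroute_polytope_def by blast
    have "of_int (kcap C (d \<xi>) (set R')) - 1 = (\<Sum>i<m. c i * (of_int (kcap C (d \<xi>) (set R')) - 1))"
      using c_sum by (simp add: sum_distrib_right[symmetric])
    also have "\<dots> \<le> (\<Sum>i<m. c i * sum (p i \<xi>) (set R'))"
      using c p_bound by (intro sum_mono mult_left_mono) auto
    also have "\<dots> = sum (y \<xi>) (set R')"
      unfolding y by (simp add: sum.swap[of _ "set R'"] sum_distrib_left)
    finally show "of_int (kcap C (d \<xi>) (set R')) - 1 \<le> sum (y \<xi>) (set R')" .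
  qed
qed

lemma finite_unit_interval_enumeration:
  fixes T :: "real set"
  assumes "finite T" "T \<subseteq> {0..<1}" "0 \<in> T"
  obtains n :: nat and \<tau> :: "nat \<Rightarrow> real"
  where "strict_mono_on {..n} \<tau>" "\<tau> 0 = 0" "\<tau> n = 1" "\<tau> ` {..<n} = T"
proof -
  define ts where "ts = sorted_list_of_set T"
  define n where "n = length ts"
  define \<tau> where "\<tau> i = (if i < n then ts ! i else 1)" for i
  have set_ts: "set ts = T" and sorted: "sorted_wrt (<) ts"
    using assms(1) by (simp_all add: ts_def)
  have ts_range: "0 \<le> ts ! i \<and> ts ! i < 1" if "i < n" for i
    using assms(2) nth_mem[of i ts] that set_ts by (auto simp: n_def)
  have mono: "strict_mono_on {..n} \<tau>"
  proof (rule strict_mono_onI)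
    fix i j assume "i \<in> {..n}" "j \<in> {..n}" "i < j"
    then show "\<tau> i < \<tau> j"
      using sorted_wrt_nth_less[OF sorted, of i j] ts_range[of i] by (auto simp: \<tau>_def n_def)
  qed
  have zero: "\<tau> 0 = 0"
  proof -
    obtain k where k: "k < n" "ts ! k = 0"
      using assms(3) set_ts by (auto simp: in_set_conv_nth n_def)
    then have "ts ! 0 \<le> ts ! k"
      using sorted_wrt_nth_less[OF sorted, of 0 k] by (cases k) (auto simp: n_def)
    then show ?thesis using k ts_range[of 0] by (simp add: \<tau>_def)
  qed
  have one: "\<tau> n = 1" by (simp add: \<tau>_def)
  have image: "\<tau> ` {..<n} = T"
    using set_ts by (auto simp: \<tau>_def n_def set_conv_nth image_iff)
  show ?thesis by (rule that[OF mono zero one image])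
qed

lemma ceiling_diff_eq_floor:
  fixes x t :: real
  assumes "0 \<le> t" "t < 1"
  shows "\<lceil>x - t\<rceil> = \<lfloor>x\<rfloor> + (if t < frac x then 1 else 0)"
proof -
  have frac: "frac x = x - of_int \<lfloor>x\<rfloor>" "of_int \<lfloor>x\<rfloor> \<le> x" "x < of_int \<lfloor>x\<rfloor> + 1"
    by (simp_all add: frac_def)
  show ?thesis
  proof (cases "t < frac x")
    case True
    have "\<lceil>x - t\<rceil> = \<lfloor>x\<rfloor> + 1"
      using frac assms True by (intro ceiling_unique) linarith+
    then show ?thesis using True by simp
  next
    case False
    have "\<lceil>x - t\<rceil> = \<lfloor>x\<rfloor>"
      using frac assms False by (intro ceiling_unique) linarith+
    then show ?thesis using False by simp
  qed
qed

lemma sum_staircase_ceiling: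
  fixes \<tau> :: "nat \<Rightarrow> real"
  assumes mono: "strict_mono_on {..n} \<tau>" and "\<tau> 0 = 0" "\<tau> n = 1"
    and frac_x: "frac x \<in> \<tau> ` {..<n}"
  shows "(\<Sum>i<n. (\<tau> (Suc i) - \<tau> i) * \<lceil>x - \<tau> i\<rceil>) = x"
proof -
  obtain k where k: "k < n" "frac x = \<tau> k" using frac_x by blast
  have \<tau>_less_iff: "\<tau> i < \<tau> j \<longleftrightarrow> i < j" if "i \<le> n" "j \<le> n" for i j
    using strict_mono_on_less[OF mono] that by simp
  have \<tau>_range: "0 \<le> \<tau> i \<and> \<tau> i < 1" if "i < n" for i
    using \<tau>_less_iff[of 0 i] \<tau>_less_iff[of i n] that assms(2,3) by (cases "i = 0") auto
  have "(\<Sum>i<n. (\<tau> (Suc i) - \<tau> i) * \<lceil>x - \<tau> i\<rceil>)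
      = (\<Sum>i<n. of_int \<lfloor>x\<rfloor> * (\<tau> (Suc i) - \<tau> i)) + (\<Sum>i<n. if i < k then \<tau> (Suc i) - \<tau> i else 0)"
  proof -
    have "(\<tau> (Suc i) - \<tau> i) * \<lceil>x - \<tau> i\<rceil>
        = of_int \<lfloor>x\<rfloor> * (\<tau> (Suc i) - \<tau> i) + (if i < k then \<tau> (Suc i) - \<tau> i else 0)"
      if "i < n" for i
    proof -
      have "\<tau> i < frac x \<longleftrightarrow> i < k" using \<tau>_less_iff[of i k] that k by simp
      then show ?thesis
        using ceiling_diff_eq_floor[of "\<tau> i" x] \<tau>_range[OF that] by (simp add: algebra_simps)
    qed
    then show ?thesis by (simp add: sum.distrib[symmetric])
  qed
  also have "\<dots> = of_int \<lfloor>x\<rfloor> * (\<tau> n - \<tau> 0) + (\<tau> k - \<tau> 0)"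
  proof -
    have "{..<n} \<inter> {i. i < k} = {..<k}" using k by auto
    then show ?thesis by (simp add: sum_distrib_left[symmetric] sum_lessThan_telescope sum.If_cases)
  qed
  finally show ?thesis using k assms(2,3) by (simp add: frac_def)
qed

definition prefix_sum :: "'a list \<Rightarrow> ('a \<Rightarrow> real) \<Rightarrow> nat \<Rightarrow> real" where
  "prefix_sum R h k = (\<Sum>q<k. h (R ! q))"

lemma sum_eq_prefix_sum_diff:
  "a \<le> j \<Longrightarrow> (\<Sum>q = a..<j. h (R ! q)) = prefix_sum R h j - prefix_sum R h a"
  using sum_diff_nat_ivl[of 0 a j "\<lambda>q. h (R ! q)"] by (simp add: prefix_sum_def atLeast0LessThan)

definition threshold_round :: "nat \<Rightarrow> 'v set \<Rightarrow> 'v list \<Rightarrow> (nat \<Rightarrow> 'v \<Rightarrow> real) \<Rightarrow> real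
     \<Rightarrow> nat \<Rightarrow> 'v \<Rightarrow> real" where
  "threshold_round N Vp R y \<theta> \<xi> v =
    (if \<xi> \<in> {1..N} \<and> v \<in> Vp then
      (if v \<in> set R
       then of_int \<lceil>prefix_sum R (y \<xi>) (Suc (pos R v)) - \<theta>\<rceil> - of_int \<lceil>prefix_sum R (y \<xi>) (pos R v) - \<theta>\<rceil>
       else of_int \<lceil>y \<xi> v - \<theta>\<rceil>)
     else 0)"

lemma threshold_round_nth:
  assumes "is_route Vp R" "\<xi> \<in> {1..N}" "q < length R"
  shows "threshold_round N Vp R y \<theta> \<xi> (R ! q) =
    of_int \<lceil>prefix_sum R (y \<xi>) (Suc q) - \<theta>\<rceil> - of_int \<lceil>prefix_sum R (y \<xi>) q - \<theta>\<rceil>"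
proof -
  have "R ! q \<in> Vp" "distinct R"
    using assms nth_mem[OF assms(3)] by (auto simp: is_route_def)
  then show ?thesis using assms(2,3) by (simp add: threshold_round_def pos_nth)
qed

lemma threshold_round_in_policies:
  assumes route: "is_route Vp R" and C: "C > 0" and d_nonneg: "\<forall>\<xi>\<in>{1..N}. \<forall>v\<in>Vp. 0 \<le> d \<xi> v"
    and y: "y \<in> subroute_polytope N Vp C d R" and \<theta>: "0 \<le> \<theta>" "\<theta> < 1"
  shows "threshold_round N Vp R y \<theta> \<in> policies N Vp C d R"
  unfolding policies_def
proof (intro CollectI conjI allI impI ballI)
  fix \<xi> v assume "\<xi> \<notin> {1..N} \<or> v \<notin> Vp"
  then show "threshold_round N Vp R y \<theta> \<xi> v = 0" by (auto simp: threshold_round_def)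
next
  fix \<xi> assume \<xi>: "\<xi> \<in> {1..N}"
  define P where "P = prefix_sum R (y \<xi>)"
  define z where "z = threshold_round N Vp R y \<theta> \<xi>"
  have y_nonneg: "\<forall>v\<in>Vp. 0 \<le> y \<xi> v"
    and y_bound: "\<forall>R'\<in>subroutes R. of_int (kcap C (d \<xi>) (set R')) - 1 \<le> sum (y \<xi>) (set R')"
    using y \<xi> unfolding subroute_polytope_def by auto
  have distinct: "distinct R" and customers: "\<And>q. q < length R \<Longrightarrow> R ! q \<in> Vp"
    using route by (auto simp: is_route_def)
  have sum_z: "(\<Sum>q = a..<j. z (R ! q)) = of_int \<lceil>P j - \<theta>\<rceil> - of_int \<lceil>P a - \<theta>\<rceil>"
    if "a \<le> j" "j \<le> length R" for a j
  proof -
    have "(\<Sum>q = a..<j. z (R ! q)) = (\<Sum>q = a..<j. of_int \<lceil>P (Suc q) - \<theta>\<rceil> - of_int \<lceil>P q - \<theta>\<rceil>)"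
      using that by (intro sum.cong) (auto simp: z_def P_def threshold_round_nth[OF route \<xi>])
    then show ?thesis
      using sum_Suc_diff'[OF that(1), of "\<lambda>q. real_of_int \<lceil>P q - \<theta>\<rceil>"] by simp
  qed
  have "\<forall>v\<in>Vp. z v \<in> \<int> \<and> 0 \<le> z v"
  proof
    fix v assume v: "v \<in> Vp"
    show "z v \<in> \<int> \<and> 0 \<le> z v"
    proof (cases "v \<in> set R")
      case True
      then obtain q where q: "q < length R" "v = R ! q" by (auto simp: in_set_conv_nth)
      have "P q \<le> P (Suc q)"
        using y_nonneg customers[OF q(1)] by (simp add: P_def prefix_sum_def)
      then have "\<lceil>P q - \<theta>\<rceil> \<le> \<lceil>P (Suc q) - \<theta>\<rceil>" by (intro ceiling_mono) simp
      then show ?thesis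
        using q by (simp add: z_def P_def threshold_round_nth[OF route \<xi>])
    next
      case False
      have "0 \<le> y \<xi> v" using y_nonneg v by blast
      then have "0 \<le> \<lceil>y \<xi> v - \<theta>\<rceil>" using \<theta> by simp
      then show ?thesis using False \<xi> v by (simp add: z_def threshold_round_def)
    qed
  qed
  moreover have "\<forall>R'\<in>subroutes R. of_int (kcap C (d \<xi>) (set R')) - 1 \<le> sum z (set R')"
  proof
    fix R' assume "R' \<in> subroutes R"
    then obtain a j where aj: "a < j" "j \<le> length R" "R' = drop a (take j R)"
      by (rule subroutesE)
    have "of_int (kcap C (d \<xi>) (set R')) - 1 \<le> sum (y \<xi>) (set R')"
      using y_bound \<open>R' \<in> subroutes R\<close> by blast
    also have "sum (y \<xi>) (set R') = P j - P a"
      using aj by (simp add: sum_set_drop_take[OF distinct] sum_eq_prefix_sum_diff P_def)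
    finally have "\<lceil>P a - \<theta>\<rceil> + (kcap C (d \<xi>) (set R') - 1) \<le> \<lceil>P j - \<theta>\<rceil>"
      by (intro ceiling_add_le_ceiling) simp
    then show "of_int (kcap C (d \<xi>) (set R')) - 1 \<le> sum z (set R')"
      using aj by (simp add: sum_set_drop_take[OF distinct] sum_z)
  qed
  ultimately show "z \<in> recourse_actions Vp C (d \<xi>) R"
    using recourse_actions_iff_subroute_bounds[OF route C] d_nonneg \<xi> by blast
qed

lemma threshold_round_average:
  assumes route: "is_route Vp R"
    and y_zero: "\<forall>\<xi> v. (\<xi> \<notin> {1..N} \<or> v \<notin> Vp) \<longrightarrow> y \<xi> v = 0"
    and \<tau>: "strict_mono_on {..n} \<tau>" "\<tau> 0 = 0" "\<tau> n = 1"
    and frac_prefix: "\<And>\<xi> k. \<xi> \<in> {1..N} \<Longrightarrow> k \<le> length R \<Longrightarrow> frac (prefix_sum R (y \<xi>) k) \<in> \<tau> ` {..<n}"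
    and frac_y: "\<And>\<xi> v. \<xi> \<in> {1..N} \<Longrightarrow> v \<in> Vp \<Longrightarrow> frac (y \<xi> v) \<in> \<tau> ` {..<n}"
  shows "y \<xi> v = (\<Sum>i<n. (\<tau> (Suc i) - \<tau> i) * threshold_round N Vp R y (\<tau> i) \<xi> v)"
proof (cases "\<xi> \<in> {1..N} \<and> v \<in> Vp")
  case False
  then have "y \<xi> v = 0" "\<And>\<theta>. threshold_round N Vp R y \<theta> \<xi> v = 0"
    using y_zero by (auto simp: threshold_round_def)
  then show ?thesis by simp
next
  case True
  then have \<xi>: "\<xi> \<in> {1..N}" and v: "v \<in> Vp" by auto
  show ?thesis
  proof (cases "v \<in> set R")
    case True
    then obtain q where q: "q < length R" "v = R ! q" by (auto simp: in_set_conv_nth)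
    let ?P = "prefix_sum R (y \<xi>)"
    have "(\<Sum>i<n. (\<tau> (Suc i) - \<tau> i) * threshold_round N Vp R y (\<tau> i) \<xi> v)
        = (\<Sum>i<n. (\<tau> (Suc i) - \<tau> i) * \<lceil>?P (Suc q) - \<tau> i\<rceil>) - (\<Sum>i<n. (\<tau> (Suc i) - \<tau> i) * \<lceil>?P q - \<tau> i\<rceil>)"
      using q by (simp add: threshold_round_nth[OF route \<xi>] sum_subtractf right_diff_distrib)
    also have "\<dots> = ?P (Suc q) - ?P q"
      using q frac_prefix[OF \<xi>] by (simp add: sum_staircase_ceiling[OF \<tau>])
    finally show ?thesis using q by (simp add: prefix_sum_def)
  next
    case False
    then show ?thesis
      using \<xi> v sum_staircase_ceiling[OF \<tau> frac_y[OF \<xi> v]] by (simp add: threshold_round_def)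
  qed
qed

lemma subroute_polytope_subset_conv_policies:
  assumes "finite Vp" and route: "is_route Vp R" and C: "C > 0"
    and d_nonneg: "\<forall>\<xi>\<in>{1..N}. \<forall>v\<in>Vp. 0 \<le> d \<xi> v"
  shows "subroute_polytope N Vp C d R \<subseteq> conv (policies N Vp C d R)"
proof
  fix y assume y: "y \<in> subroute_polytope N Vp C d R"
  define T where "T = insert 0 (frac ` ((\<lambda>(\<xi>, k). prefix_sum R (y \<xi>) k) ` ({1..N} \<times> {..length R})
                                      \<union> (\<lambda>(\<xi>, v). y \<xi> v) ` ({1..N} \<times> Vp)))"
  have "finite T" "T \<subseteq> {0..<1}" "0 \<in> T"
    using assms(1) by (auto simp: T_def frac_lt_1)
  then obtain n :: nat and \<tau> :: "nat \<Rightarrow> real"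
    where \<tau>: "strict_mono_on {..n} \<tau>" "\<tau> 0 = 0" "\<tau> n = 1" and \<tau>_T: "\<tau> ` {..<n} = T"
    by (rule finite_unit_interval_enumeration)
  have \<tau>_range: "0 \<le> \<tau> i \<and> \<tau> i < 1" if "i < n" for i
    using \<tau>_T \<open>T \<subseteq> {0..<1}\<close> that by auto
  have weights_nonneg: "0 \<le> \<tau> (Suc i) - \<tau> i" if "i < n" for i
    using strict_mono_onD[OF \<tau>(1), of i "Suc i"] that by simp
  have y_eq: "y \<xi> v = (\<Sum>i<n. (\<tau> (Suc i) - \<tau> i) * threshold_round N Vp R y (\<tau> i) \<xi> v)" for \<xi> v
  proof (rule threshold_round_average[OF route _ \<tau>])
    show "\<forall>\<xi> v. (\<xi> \<notin> {1..N} \<or> v \<notin> Vp) \<longrightarrow> y \<xi> v = 0"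
      using y by (simp add: subroute_polytope_def)
    show "frac (prefix_sum R (y \<xi>') k) \<in> \<tau> ` {..<n}" if "\<xi>' \<in> {1..N}" "k \<le> length R" for \<xi>' k
      using that unfolding \<tau>_T T_def by (intro insertI2 imageI UnI1) force
    show "frac (y \<xi>' v') \<in> \<tau> ` {..<n}" if "\<xi>' \<in> {1..N}" "v' \<in> Vp" for \<xi>' v'
      using that unfolding \<tau>_T T_def by (intro insertI2 imageI UnI2) force
  qed
  show "y \<in> conv (policies N Vp C d R)"
    unfolding conv_def
  proof (intro CollectI exI[of _ n] exI[of _ "\<lambda>i. \<tau> (Suc i) - \<tau> i"]
      exI[of _ "\<lambda>i. threshold_round N Vp R y (\<tau> i)"] conjI allI impI ext)
    fix i assume "i < n"
    then show "0 \<le> \<tau> (Suc i) - \<tau> i" "threshold_round N Vp R y (\<tau> i) \<in> policies N Vp C d R"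
      using weights_nonneg \<tau>_range threshold_round_in_policies[OF route C d_nonneg y] by auto
  next
    show "(\<Sum>i<n. \<tau> (Suc i) - \<tau> i) = 1"
      using \<tau> by (simp add: sum_lessThan_telescope)
  qed (rule y_eq)
qed

lemma conv_policies_eq_subroute_polytope:
  assumes "finite Vp" "is_route Vp R" "C > 0" "\<forall>\<xi>\<in>{1..N}. \<forall>v\<in>Vp. 0 \<le> d \<xi> v"
  shows "conv (policies N Vp C d R) = subroute_polytope N Vp C d R"
proof (rule antisym)
  have "conv (policies N Vp C d R) \<subseteq> conv (subroute_polytope N Vp C d R)"
    using policies_subset_subroute_polytope[OF assms(2-4)] by (rule conv_mono)
  then show "conv (policies N Vp C d R) \<subseteq> subroute_polytope N Vp C d R"
    using conv_subroute_polytope by blast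
qed (rule subroute_polytope_subset_conv_policies[OF assms])

theorem theorem2:
  fixes Vp :: "'v set" and N :: nat and C :: real
    and d :: "nat \<Rightarrow> 'v \<Rightarrow> real" and p :: "nat \<Rightarrow> real" and R :: "'v list"
  assumes "finite Vp"
    and "C \<in> \<rat>" and "C > 0"
    and "\<forall>\<xi>\<in>{1..N}. \<forall>v\<in>Vp. d \<xi> v \<in> \<rat> \<and> 0 \<le> d \<xi> v \<and> d \<xi> v \<le> C"
    and "\<forall>\<xi>\<in>{1..N}. p \<xi> \<in> \<rat> \<and> 0 \<le> p \<xi> \<and> p \<xi> \<le> 1"
    and "(\<Sum>\<xi>\<in>{1..N}. p \<xi>) = 1"
    and "is_route Vp R"
  shows "conv (policies N Vp C d R) =
    {y. (\<forall>\<xi> v. (\<xi> \<notin> {1..N} \<or> v \<notin> Vp) \<longrightarrow> y \<xi> v = 0) \<and>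
        (\<forall>\<xi>\<in>{1..N}. \<forall>v\<in>Vp. y \<xi> v \<ge> 0) \<and>
        (\<forall>\<xi>\<in>{1..N}. \<forall>R'\<in>subroutes R.
            sum (y \<xi>) (set R') \<ge> of_int (kcap C (d \<xi>) (set R')) - 1)}"
proof -
  have "\<forall>\<xi>\<in>{1..N}. \<forall>v\<in>Vp. 0 \<le> d \<xi> v"
    using assms(4) by blast
  from conv_policies_eq_subroute_polytope[OF assms(1,7,3) this]
  show ?thesis unfolding subroute_polytope_def .
qed

end
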